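(* Let $n\ge2$ and let $U$ be a domain of $\mathbb{R}^n$. For every $v\in C^\infty(U)$, in $U$ we have $$\Big|\,|D^2vDv|^2-\Delta v\,\Delta_\infty v-\tfrac12\big[|D^2v|^2-(\Delta v)^2\big]|Dv|^2\Big|\le\frac{n-2}{2}\Big[|D^2v|^2|Dv|^2-|D^2vDv|^2\Big].$$
   Context: $\Delta v=\operatorname{div}(Dv)$, $\Delta_\infty v=\langle D^2v\,Dv,Dv\rangle$, and $|D^2v|$ is the Frobenius (Hilbert–Schmidt) norm of the Hessian. *)

theory Defs
  imports "HOL-Analysis.Analysis"
begin

definition partial :: "'n::finite \<Rightarrow> (real^'n \<Rightarrow> real) \<Rightarrow> real^'n \<Rightarrow> real" where
  "partial i f x = frechet_derivative f (at x) (axis i 1)"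

fun iter_partial :: "'n::finite list \<Rightarrow> (real^'n \<Rightarrow> real) \<Rightarrow> real^'n \<Rightarrow> real" where
  "iter_partial [] f = f"
| "iter_partial (i # is) f = partial i (iter_partial is f)"

definition smooth_on :: "(real^'n::finite) set \<Rightarrow> (real^'n \<Rightarrow> real) \<Rightarrow> bool" where
  "smooth_on U f \<longleftrightarrow> (\<forall>is. iter_partial is f differentiable_on U)"

definition grad :: "(real^'n::finite \<Rightarrow> real) \<Rightarrow> real^'n \<Rightarrow> real^'n" where
  "grad f x = (\<chi> i. partial i f x)"

definition hessian :: "(real^'n::finite \<Rightarrow> real) \<Rightarrow> real^'n \<Rightarrow> real^'n^'n" where
  "hessian f x = (\<chi> i j. partial i (partial j f) x)"

definition laplacian :: "(real^'n::finite \<Rightarrow> real) \<Rightarrow> real^'n \<Rightarrow> real" where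
  "laplacian f x = (\<Sum>i\<in>UNIV. partial i (\<lambda>y. grad f y $ i) x)"

definition inf_laplacian :: "(real^'n::finite \<Rightarrow> real) \<Rightarrow> real^'n \<Rightarrow> real" where
  "inf_laplacian f x = ((hessian f x *v grad f x) \<bullet> grad f x)"

definition frob_norm_sq :: "real^'n::finite^'n \<Rightarrow> real" where
  "frob_norm_sq A = (\<Sum>i\<in>UNIV. \<Sum>j\<in>UNIV. (A $ i $ j)^2)"

end

theory Submission
  imports Defs
begin

text \<open>By Schwarz's theorem the Hessian \<open>H\<close> is symmetric, so the claim is an inequality
  \<open>\<bar>L\<bar> \<le> R\<close> for a symmetric matrix \<open>H\<close> and a vector \<open>g\<close>. Put \<open>G = |g|\<^sup>2\<close>, \<open>c = g \<bullet> H g\<close>,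
  \<open>A = |H g|\<^sup>2\<close> and \<open>M = G\<^sup>2 |H|\<^sup>2 - 2 G A + c\<^sup>2\<close>. With \<open>P\<close> the orthogonal projection onto the
  complement of \<open>g\<close>, Cauchy-Schwarz for the trace on that \<open>(n - 1)\<close>-dimensional space,
  \<open>(tr (P H P))\<^sup>2 \<le> (n - 1) |P H P|\<^sup>2\<close>, reads \<open>(G tr H - c)\<^sup>2 \<le> (n - 1) M\<close>. Then
  \<open>2 G (R - L) = (n - 2) (G A - c\<^sup>2) + ((n - 1) M - (G tr H - c)\<^sup>2)\<close> and
  \<open>2 G (R + L) = (n - 2) (G A - c\<^sup>2) + (n - 3) M + (G tr H - c)\<^sup>2\<close> are nonnegative, except that
  the coefficient \<open>n - 3\<close> is negative for \<open>n = 2\<close>; but then \<open>L\<close> vanishes identically.\<close>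

lemma has_real_derivative_partial_along_axis:
  fixes f :: "real^'n \<Rightarrow> real"
  assumes "f differentiable (at (y + t *\<^sub>R axis i 1))"
  shows "((\<lambda>s. f (y + s *\<^sub>R axis i 1)) has_real_derivative partial i f (y + t *\<^sub>R axis i 1)) (at t)"
proof -
  define D where "D = frechet_derivative f (at (y + t *\<^sub>R axis i 1))"
  have "(f has_derivative D) (at (y + t *\<^sub>R axis i 1))"
    using assms frechet_derivative_works unfolding D_def by blast
  then have "((\<lambda>s. f (y + s *\<^sub>R axis i 1)) has_derivative (\<lambda>s. D (s *\<^sub>R axis i 1))) (at t)"
    by (rule has_derivative_compose[rotated]) (auto intro!: derivative_eq_intros)
  moreover have "(\<lambda>s. D (s *\<^sub>R axis i 1)) = (*) (D (axis i 1))"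
    using linear_scale[OF linear_frechet_derivative[OF assms]] by (auto simp: D_def fun_eq_iff)
  ultimately show ?thesis
    unfolding has_field_derivative_def partial_def D_def by simp
qed

lemma second_difference_eq_mixed_partial:
  fixes v :: "real^'n \<Rightarrow> real"
  assumes "h > 0"
    and diff: "\<And>a b. 0 \<le> a \<Longrightarrow> a \<le> h \<Longrightarrow> 0 \<le> b \<Longrightarrow> b \<le> h \<Longrightarrow>
      v differentiable (at (x + a *\<^sub>R axis i 1 + b *\<^sub>R axis j 1)) \<and>
      partial i v differentiable (at (x + a *\<^sub>R axis i 1 + b *\<^sub>R axis j 1))"
  obtains a b where "0 < a" "a < h" "0 < b" "b < h"
    "v (x + h *\<^sub>R axis i 1 + h *\<^sub>R axis j 1) - v (x + h *\<^sub>R axis j 1) - v (x + h *\<^sub>R axis i 1) + v x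
      = h^2 * partial j (partial i v) (x + a *\<^sub>R axis i 1 + b *\<^sub>R axis j 1)"
proof -
  define ei ej :: "real^'n" where "ei = axis i 1" and "ej = axis j 1"
  have "((\<lambda>s. v (x + s *\<^sub>R ei + h *\<^sub>R ej) - v (x + s *\<^sub>R ei)) has_real_derivative
      partial i v (x + s *\<^sub>R ei + h *\<^sub>R ej) - partial i v (x + s *\<^sub>R ei)) (at s)"
    if "0 \<le> s" "s \<le> h" for s
  proof (rule DERIV_diff)
    have "v differentiable (at (x + h *\<^sub>R ej + s *\<^sub>R ei))"
      using diff[of s h] that \<open>h > 0\<close> by (simp add: ei_def ej_def add_ac)
    from has_real_derivative_partial_along_axis[OF this[unfolded ei_def]]
    show "((\<lambda>s. v (x + s *\<^sub>R ei + h *\<^sub>R ej)) has_real_derivative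
        partial i v (x + s *\<^sub>R ei + h *\<^sub>R ej)) (at s)"
      by (simp add: ei_def ej_def algebra_simps)
    show "((\<lambda>s. v (x + s *\<^sub>R ei)) has_real_derivative partial i v (x + s *\<^sub>R ei)) (at s)"
      using has_real_derivative_partial_along_axis[of v x s i] diff[of s 0] that \<open>h > 0\<close>
      by (simp add: ei_def)
  qed
  from MVT2[OF \<open>h > 0\<close> this] obtain a where a: "0 < a" "a < h" and first:
    "v (x + h *\<^sub>R ei + h *\<^sub>R ej) - v (x + h *\<^sub>R ei) - v (x + h *\<^sub>R ej) + v x
      = h * (partial i v (x + a *\<^sub>R ei + h *\<^sub>R ej) - partial i v (x + a *\<^sub>R ei))"
    by auto
  have "((\<lambda>t. partial i v (x + a *\<^sub>R ei + t *\<^sub>R ej)) has_real_derivative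
      partial j (partial i v) (x + a *\<^sub>R ei + t *\<^sub>R ej)) (at t)" if "0 \<le> t" "t \<le> h" for t
    using has_real_derivative_partial_along_axis[of "partial i v" "x + a *\<^sub>R ei" t j] diff[of a t] that a
    by (simp add: ei_def ej_def)
  from MVT2[OF \<open>h > 0\<close> this] obtain b where b: "0 < b" "b < h" and second:
    "partial i v (x + a *\<^sub>R ei + h *\<^sub>R ej) - partial i v (x + a *\<^sub>R ei)
      = h * partial j (partial i v) (x + a *\<^sub>R ei + b *\<^sub>R ej)"
    by auto
  show ?thesis
    using that[OF a b] first second by (simp add: ei_def ej_def power2_eq_square algebra_simps)
qed

lemma continuous_at_eq_if_agree_nearby:
  fixes f g :: "'a::metric_space \<Rightarrow> real"
  assumes "continuous (at x) f" "continuous (at x) g"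
    and near: "\<And>\<delta>. \<delta> > 0 \<Longrightarrow> \<exists>p q. dist p x < \<delta> \<and> dist q x < \<delta> \<and> f p = g q"
  shows "f x = g x"
proof -
  have "dist (f x) (g x) \<le> 0 + \<epsilon>" if "\<epsilon> > 0" for \<epsilon>
  proof -
    have "\<epsilon>/2 > 0"
      using that by simp
    then obtain \<delta>f \<delta>g where "\<delta>f > 0" "\<delta>g > 0"
      and \<delta>f: "\<And>y. dist y x < \<delta>f \<Longrightarrow> dist (f y) (f x) < \<epsilon>/2"
      and \<delta>g: "\<And>y. dist y x < \<delta>g \<Longrightarrow> dist (g y) (g x) < \<epsilon>/2"
      using assms(1,2) unfolding continuous_at_eps_delta by blast
    obtain p q where "dist p x < min \<delta>f \<delta>g" "dist q x < min \<delta>f \<delta>g" "f p = g q"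
      using near[of "min \<delta>f \<delta>g"] \<open>\<delta>f > 0\<close> \<open>\<delta>g > 0\<close> by auto
    have "dist (f x) (g x) \<le> dist (f p) (f x) + dist (g q) (g x)"
      using dist_triangle2[of "f x" "g x" "f p"] \<open>f p = g q\<close> by (simp add: dist_commute)
    also have "\<dots> < \<epsilon>"
      using \<delta>f[of p] \<delta>g[of q] \<open>dist p x < _\<close> \<open>dist q x < _\<close> by simp
    finally show ?thesis
      by simp
  qed
  then show ?thesis
    using field_le_epsilon[of "dist (f x) (g x)" 0] by simp
qed

lemma dist_add_axes_le:
  fixes x :: "real^'n"
  assumes "0 \<le> a" "0 \<le> b"
  shows "dist (x + a *\<^sub>R axis i 1 + b *\<^sub>R axis j 1) x \<le> a + b"
  using norm_triangle_ineq[of "a *\<^sub>R axis i (1::real)" "b *\<^sub>R axis j 1"] assms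
  by (simp add: dist_norm)

lemma smooth_on_differentiable_at:
  assumes "open U" "smooth_on U v" "y \<in> U"
  shows "iter_partial is v differentiable (at y)"
  using assms at_within_open unfolding smooth_on_def differentiable_on_def by metis

lemma mixed_partials_commute:
  fixes v :: "real^'n \<Rightarrow> real"
  assumes "open U" "smooth_on U v" "x \<in> U"
  shows "partial i (partial j v) x = partial j (partial i v) x"
proof (rule continuous_at_eq_if_agree_nearby[where f = "partial i (partial j v)"])
  have "continuous (at x) (iter_partial [k, l] v)" for k l
    using smooth_on_differentiable_at[OF assms] differentiable_imp_continuous_within by blast
  then show "continuous (at x) (partial i (partial j v))" "continuous (at x) (partial j (partial i v))"
    by simp_all
  fix \<delta> :: real
  assume "\<delta> > 0"
  obtain r where "r > 0" "ball x r \<subseteq> U"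
    using assms openE by blast
  define h where "h = min \<delta> r / 3"
  have "h > 0"
    using \<open>\<delta> > 0\<close> \<open>r > 0\<close> by (simp add: h_def)
  have near: "dist (x + a *\<^sub>R axis k 1 + b *\<^sub>R axis l 1) x < min \<delta> r"
    if "0 \<le> a" "a \<le> h" "0 \<le> b" "b \<le> h" for a b k l
    using dist_add_axes_le[OF that(1,3), of x k l] that \<open>h > 0\<close> by (simp add: h_def)
  have diff: "v differentiable (at (x + a *\<^sub>R axis k 1 + b *\<^sub>R axis l 1)) \<and>
      partial k v differentiable (at (x + a *\<^sub>R axis k 1 + b *\<^sub>R axis l 1))"
    if "0 \<le> a" "a \<le> h" "0 \<le> b" "b \<le> h" for a b k l
    using smooth_on_differentiable_at[OF assms(1,2), of _ "[]"]
      smooth_on_differentiable_at[OF assms(1,2), of _ "[k]"] near[OF that, of k l] \<open>ball x r \<subseteq> U\<close>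
    by (auto simp: dist_commute)
  text \<open>The square second difference is symmetric in \<open>i\<close> and \<open>j\<close>, so it equals \<open>h\<^sup>2\<close> times
    either mixed partial at some point of the square; these points tend to \<open>x\<close> with \<open>h\<close>.\<close>
  obtain a b where ab: "0 < a" "a < h" "0 < b" "b < h" and ij:
    "v (x + h *\<^sub>R axis i 1 + h *\<^sub>R axis j 1) - v (x + h *\<^sub>R axis j 1) - v (x + h *\<^sub>R axis i 1) + v x
      = h^2 * partial j (partial i v) (x + a *\<^sub>R axis i 1 + b *\<^sub>R axis j 1)"
    by (rule second_difference_eq_mixed_partial[OF \<open>h > 0\<close> diff])
  obtain a' b' where ab': "0 < a'" "a' < h" "0 < b'" "b' < h" and ji:
    "v (x + h *\<^sub>R axis j 1 + h *\<^sub>R axis i 1) - v (x + h *\<^sub>R axis i 1) - v (x + h *\<^sub>R axis j 1) + v x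
      = h^2 * partial i (partial j v) (x + a' *\<^sub>R axis j 1 + b' *\<^sub>R axis i 1)"
    by (rule second_difference_eq_mixed_partial[OF \<open>h > 0\<close> diff])
  have swap: "x + h *\<^sub>R axis j 1 + h *\<^sub>R axis i 1 = x + h *\<^sub>R axis i (1::real) + h *\<^sub>R axis j 1"
    by (simp add: add_ac)
  have "h^2 * partial i (partial j v) (x + a' *\<^sub>R axis j 1 + b' *\<^sub>R axis i 1)
      = h^2 * partial j (partial i v) (x + a *\<^sub>R axis i 1 + b *\<^sub>R axis j 1)"
    using ij ji[unfolded swap] by linarith
  then have "partial i (partial j v) (x + a' *\<^sub>R axis j 1 + b' *\<^sub>R axis i 1)
      = partial j (partial i v) (x + a *\<^sub>R axis i 1 + b *\<^sub>R axis j 1)"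
    using \<open>h > 0\<close> by simp
  moreover have "dist (x + a' *\<^sub>R axis j 1 + b' *\<^sub>R axis i 1) x < \<delta>"
    "dist (x + a *\<^sub>R axis i 1 + b *\<^sub>R axis j 1) x < \<delta>"
    using near[of a' b' j i] near[of a b i j] ab ab' by auto
  ultimately show "\<exists>p q. dist p x < \<delta> \<and> dist q x < \<delta> \<and>
      partial i (partial j v) p = partial j (partial i v) q"
    by blast
qed

definition outer :: "real^'n \<Rightarrow> real^'n \<Rightarrow> real^'n^'n" where
  "outer a b = (\<chi> i j. a$i * b$j)"

lemma outer_mult_vector: "outer a b *v x = (b \<bullet> x) *\<^sub>R a"
  by (simp add: outer_def matrix_vector_mult_def inner_vec_def vec_eq_iff sum_distrib_left mult_ac)

lemma inner_matrix_outer: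
  fixes H :: "real^'n^'n"
  shows "inner H (outer a b) = a \<bullet> (H *v b)" and "inner (outer a b) H = a \<bullet> (H *v b)"
proof -
  show "inner H (outer a b) = a \<bullet> (H *v b)"
    by (simp add: inner_vec_def outer_def matrix_vector_mult_def sum_distrib_left mult_ac)
  then show "inner (outer a b) H = a \<bullet> (H *v b)"
    by (simp add: inner_commute)
qed

lemma inner_matrix_mat1:
  fixes H :: "real^'n^'n"
  shows "inner H (mat 1) = trace H" and "inner (mat 1) H = trace H"
proof -
  show "inner H (mat 1) = trace H"
    by (simp add: inner_vec_def mat_def trace_def if_distrib cong: if_cong)
  then show "inner (mat 1) H = trace H"
    by (simp add: inner_commute)
qed

lemma trace_outer: "trace (outer a b) = a \<bullet> b"
  by (simp add: trace_def outer_def inner_vec_def)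

lemma inner_symmetric_matrix_commute:
  fixes H :: "real^'n^'n"
  assumes "transpose H = H"
  shows "a \<bullet> (H *v b) = b \<bullet> (H *v a)"
proof -
  have "a \<bullet> (H *v b) = (a v* H) \<bullet> b"
    by (simp add: dot_lmul_matrix)
  also have "\<dots> = (H *v a) \<bullet> b"
    by (metis assms transpose_matrix_vector)
  finally show ?thesis
    by (simp add: inner_commute)
qed

lemma frob_norm_sq_eq_inner: "frob_norm_sq H = inner H H"
  by (simp add: frob_norm_sq_def inner_vec_def power2_eq_square)

text \<open>With \<open>P\<close> the orthogonal projection onto the complement of \<open>g\<close>, we have
  \<open>X = G\<^sup>2 P H P\<close> and \<open>K = G P\<close>; the factors of \<open>G\<close> avoid dividing by \<open>G\<close>.\<close>

lemma compression_inner_products: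
  fixes H :: "real^'n^'n" and g :: "real^'n"
  assumes "transpose H = H"
  defines "G \<equiv> g \<bullet> g" and "w \<equiv> H *v g"
  defines "c \<equiv> g \<bullet> w"
  defines "X \<equiv> G^2 *\<^sub>R H - G *\<^sub>R (outer g w + outer w g) + c *\<^sub>R outer g g"
    and "K \<equiv> G *\<^sub>R mat 1 - outer g g"
  shows "inner X K = G^2 * (G * trace H - c)"
    and "inner X X = G^2 * (G^2 * inner H H - 2 * G * (w \<bullet> w) + c^2)"
    and "inner K K = (real CARD('n) - 1) * G^2"
proof -
  have Hw: "g \<bullet> (H *v w) = w \<bullet> w" "w \<bullet> (H *v g) = w \<bullet> w" "g \<bullet> (H *v g) = c"
    using inner_symmetric_matrix_commute[OF assms(1), of g w] by (simp_all add: w_def c_def)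
  note bilinear = inner_add_left inner_add_right inner_diff_left inner_diff_right
    inner_scaleR_left inner_scaleR_right
  note evaluate = outer_mult_vector inner_matrix_outer inner_matrix_mat1 trace_outer trace_I
    Hw inner_commute[of w g] G_def[symmetric] c_def[symmetric]
  show "inner X K = G^2 * (G * trace H - c)"
    unfolding X_def K_def bilinear by (simp add: evaluate) (simp add: power2_eq_square algebra_simps)
  show "inner X X = G^2 * (G^2 * inner H H - 2 * G * (w \<bullet> w) + c^2)"
    unfolding X_def bilinear by (simp add: evaluate) (simp add: power2_eq_square algebra_simps)
  show "inner K K = (real CARD('n) - 1) * G^2"
    unfolding K_def bilinear by (simp add: evaluate) (simp add: power2_eq_square algebra_simps)
qed

lemma trace_compression_sq_le:
  fixes H :: "real^'n^'n" and g :: "real^'n"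
  assumes "transpose H = H"
  shows "((g \<bullet> g) * trace H - g \<bullet> (H *v g))^2 \<le> (real CARD('n) - 1) *
    ((g \<bullet> g)^2 * inner H H - 2 * (g \<bullet> g) * ((H *v g) \<bullet> (H *v g)) + (g \<bullet> (H *v g))^2)"
proof (cases "g = 0")
  case True
  then show ?thesis by simp
next
  case False
  define G c M where "G = g \<bullet> g" and "c = g \<bullet> (H *v g)"
    and "M = (g \<bullet> g)^2 * inner H H - 2 * (g \<bullet> g) * ((H *v g) \<bullet> (H *v g)) + (g \<bullet> (H *v g))^2"
  have "G > 0"
    using False by (simp add: G_def)
  note products = compression_inner_products[OF assms, where g = g, folded G_def c_def]
  have "(G^2 * (G * trace H - c))^2 \<le> (G^2 * M) * ((real CARD('n) - 1) * G^2)"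
    using Cauchy_Schwarz_ineq[of
        "G^2 *\<^sub>R H - G *\<^sub>R (outer g (H *v g) + outer (H *v g) g) + c *\<^sub>R outer g g"
        "G *\<^sub>R mat 1 - outer g g"]
    unfolding products by (simp add: M_def G_def c_def)
  then have "(G^2 * G^2) * (G * trace H - c)^2 \<le> (G^2 * G^2) * ((real CARD('n) - 1) * M)"
    by (simp add: power_mult_distrib power2_eq_square mult_ac)
  then show ?thesis
    using \<open>G > 0\<close> by (simp add: G_def c_def M_def mult_le_cancel_left_pos)
qed

lemma symmetric_matrix_identity_card_2:
  fixes H :: "real^'n^'n" and g :: "real^'n"
  assumes "transpose H = H" and "CARD('n) = 2"
  shows "(norm (H *v g))^2 - trace H * ((H *v g) \<bullet> g)
      - (1/2) * (frob_norm_sq H - (trace H)^2) * (norm g)^2 = 0"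
proof -
  obtain p q :: 'n where "p \<noteq> q" and UNIV_eq: "UNIV = {p, q}"
    using assms(2) card_2_iff by metis
  have sum_UNIV: "(\<Sum>i\<in>UNIV. f i) = f p + f q" for f :: "'n \<Rightarrow> real"
    using \<open>p \<noteq> q\<close> by (simp add: UNIV_eq)
  have "H$q$p = H$p$q"
    by (metis assms(1) transpose_def vec_lambda_beta)
  then show ?thesis
    unfolding power2_norm_eq_inner inner_vec_def matrix_vector_mult_def frob_norm_sq_def trace_def
    by (simp add: sum_UNIV inner_real_def) (simp add: power2_eq_square algebra_simps)
qed

lemma abs_le_of_trace_compression_bound:
  fixes n G c A S Q :: real
  defines "M \<equiv> G^2 * Q - 2 * G * A + c^2"
    and "L \<equiv> A - S * c - (1/2) * (Q - S^2) * G" and "R \<equiv> (n - 2) / 2 * (Q * G - A)"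
  assumes "G > 0" and n: "n = 2 \<or> n \<ge> 3" and cs_vector: "c^2 \<le> G * A"
    and cs_trace: "(G * S - c)^2 \<le> (n - 1) * M" and dim_2: "n = 2 \<Longrightarrow> L = 0"
  shows "\<bar>L\<bar> \<le> R"
proof -
  have "n \<ge> 2"
    using n by linarith
  have "0 \<le> (n - 1) * M"
    using cs_trace zero_le_power2 order_trans by blast
  then have "M \<ge> 0"
    using \<open>n \<ge> 2\<close> by (simp add: zero_le_mult_iff)
  have "G * (2 * (R - L)) = (n - 2) * (G * A - c^2) + ((n - 1) * M - (G * S - c)^2)"
    by (simp add: L_def R_def M_def power2_eq_square field_simps)
  moreover have "0 \<le> (n - 2) * (G * A - c^2)"
    using \<open>n \<ge> 2\<close> cs_vector by simp
  ultimately have "0 \<le> G * (2 * (R - L))"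
    using cs_trace by linarith
  then have "L \<le> R"
    using \<open>G > 0\<close> by (simp add: zero_le_mult_iff)
  moreover have "- R \<le> L"
  proof (cases "n = 2")
    case True
    then show ?thesis
      using dim_2 by (simp add: R_def)
  next
    case False
    then have "n \<ge> 3"
      using n by linarith
    have "G * (2 * (R + L)) = (n - 2) * (G * A - c^2) + ((n - 3) * M + (G * S - c)^2)"
      by (simp add: L_def R_def M_def power2_eq_square field_simps)
    moreover have "0 \<le> (n - 2) * (G * A - c^2)" and "0 \<le> (n - 3) * M"
      using \<open>n \<ge> 3\<close> cs_vector \<open>M \<ge> 0\<close> by simp_all
    ultimately have "0 \<le> G * (2 * (R + L))"
      by (simp add: add_nonneg_nonneg)
    then show ?thesis
      using \<open>G > 0\<close> by (simp add: zero_le_mult_iff)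
  qed
  ultimately show ?thesis
    by linarith
qed

lemma symmetric_matrix_inequality:
  fixes H :: "real^'n^'n" and g :: "real^'n"
  assumes "transpose H = H" and "CARD('n) \<ge> 2"
  shows "\<bar>(norm (H *v g))^2 - trace H * ((H *v g) \<bullet> g)
      - (1/2) * (frob_norm_sq H - (trace H)^2) * (norm g)^2\<bar>
    \<le> (real CARD('n) - 2) / 2 * (frob_norm_sq H * (norm g)^2 - (norm (H *v g))^2)"
proof (cases "g = 0")
  case True
  then show ?thesis by simp
next
  case False
  have inner_forms: "(norm (H *v g))^2 = (H *v g) \<bullet> (H *v g)" "(H *v g) \<bullet> g = g \<bullet> (H *v g)"
    "frob_norm_sq H = inner H H" "(norm g)^2 = g \<bullet> g"
    by (simp_all add: power2_norm_eq_inner frob_norm_sq_eq_inner inner_commute[of "H *v g" g])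
  show ?thesis
    unfolding inner_forms
  proof (rule abs_le_of_trace_compression_bound)
    show "g \<bullet> g > 0"
      using False by simp
    show "(g \<bullet> (H *v g))^2 \<le> (g \<bullet> g) * ((H *v g) \<bullet> (H *v g))"
      using Cauchy_Schwarz_ineq[of g "H *v g"] by simp
    show "real CARD('n) = 2 \<or> real CARD('n) \<ge> 3"
      using assms(2) by (cases "CARD('n) = 2") auto
  qed (use trace_compression_sq_le[OF assms(1), of g] symmetric_matrix_identity_card_2[OF assms(1), of g]
      in \<open>simp_all add: inner_forms\<close>)
qed

lemma transpose_hessian:
  assumes "open U" "smooth_on U v" "x \<in> U"
  shows "transpose (hessian v x) = hessian v x"
  using mixed_partials_commute[OF assms] by (simp add: transpose_def hessian_def vec_eq_iff)

lemma laplacian_eq_trace_hessian: "laplacian v x = trace (hessian v x)"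
  by (simp add: laplacian_def trace_def grad_def hessian_def)

theorem lemma2p1:
  fixes U :: "(real^'n) set" and v :: "real^'n \<Rightarrow> real" and x :: "real^'n"
  assumes "CARD('n) \<ge> 2"
    and "open U" and "connected U" and "U \<noteq> {}"
    and "smooth_on U v"
    and "x \<in> U"
  shows "\<bar>(norm (hessian v x *v grad v x))^2 - laplacian v x * inf_laplacian v x
            - (1/2) * (frob_norm_sq (hessian v x) - (laplacian v x)^2) * (norm (grad v x))^2\<bar>
         \<le> (real CARD('n) - 2) / 2 *
            (frob_norm_sq (hessian v x) * (norm (grad v x))^2 - (norm (hessian v x *v grad v x))^2)"
  using symmetric_matrix_inequality[OF transpose_hessian[OF assms(2,5,6)] assms(1), of "grad v x"]
  by (simp add: laplacian_eq_trace_hessian inf_laplacian_def)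

end
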